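(* For any two policy profiles $\pi,\pi'$ and every player $i$, $$\|v_i(\pi)-v_i(\pi')\|\le\frac{3\sqrt{A_i}}{\zeta^3}\sum_{j\in\mathcal N}\sqrt{A_j}\,\|\pi_j-\pi'_j\|,$$ and consequently $\|v(\pi)-v(\pi')\|\le\frac{3A}{\zeta^3}\|\pi-\pi'\|$ with $A=\sum_{i\in\mathcal N}A_i$.
   Context: Standing setting. Finite $N$-player stochastic game with random stopping: players $\mathcal N$, finite states $\mathcal S$, finite action sets $\mathcal A_i$ with $A_i=|\mathcal A_i|$, $\mathcal A=\prod_i\mathcal A_i$, rewards $r_i:\mathcal S\times\mathcal A\to[-1,1]$, nonnegative transition weights $P(s'\mid s,a)$ with stopping probability $\zeta_{s,a}=1-\sum_{s'}P(s'\mid s,a)$, $\zeta=\min_{s,a}\zeta_{s,a}>0$, initial distribution $\rho$. Policies $\pi_i\in\Delta(\mathcal A_i)^{\mathcal S}\subset\mathbb R^{\mathcal S\times\mathcal A_i}$, Euclidean norms. Episodes: $s_0\sim\rho$; players independently draw $a_{i,t}\sim\pi_i(\cdot\mid s_t)$; stop w.p. $\zeta_{s_t,a_t}$ ($T(\tau)=t$), else move to $s'$ w.p. $P(s'\mid s_t,a_t)$. $V_{i,\rho}(\pi)=\mathbb E_\pi[\sum_{t=0}^{T(\tau)}r_i(s_t,a_t)]$, $v_i(\pi)=\nabla_{\pi_i}V_{i,\rho}(\pi)$ (gradient in player $i$'s own entries), $v=(v_i)_i$. *)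

theory Defs
  imports "HOL-Analysis.Analysis"
begin

text \<open>Players: finite type 'p; states: finite type 's; actions: elements of a common
 type 'a, player i's action set is AS i (finite, nonempty).
 A policy profile is pol :: 'p \<Rightarrow> 's \<Rightarrow> 'a \<Rightarrow> real, player i's entries being
 pol i s b for s a state and b \<in> AS i.\<close>

definition joint_actions :: "('p \<Rightarrow> 'a set) \<Rightarrow> ('p \<Rightarrow> 'a) set" where
  "joint_actions AS = PiE UNIV AS"

definition joint_weight :: "('p::finite \<Rightarrow> 's \<Rightarrow> 'a \<Rightarrow> real) \<Rightarrow> 's \<Rightarrow> ('p \<Rightarrow> 'a) \<Rightarrow> real" where
  "joint_weight pol s a = (\<Prod>i\<in>UNIV. pol i s (a i))"

text \<open>occ t s = probability that the episode has not stopped before time t and s_t = s.\<close>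
fun occ :: "('p::finite \<Rightarrow> 'a set) \<Rightarrow> ('s::finite \<Rightarrow> ('p \<Rightarrow> 'a) \<Rightarrow> 's \<Rightarrow> real)
             \<Rightarrow> ('s \<Rightarrow> real) \<Rightarrow> ('p \<Rightarrow> 's \<Rightarrow> 'a \<Rightarrow> real) \<Rightarrow> nat \<Rightarrow> 's \<Rightarrow> real" where
  "occ AS P rho pol 0 s' = rho s'"
| "occ AS P rho pol (Suc t) s' =
     (\<Sum>s\<in>UNIV. \<Sum>a\<in>joint_actions AS. occ AS P rho pol t s * joint_weight pol s a * P s a s')"

text \<open>Value V_{i,rho}(pol) = E[ sum_{t=0}^{T} r_i(s_t,a_t) ], written out by linearity
 of expectation as a sum over time steps (as a polynomial series in the policy entries).\<close>
definition value_fn :: "('p::finite \<Rightarrow> 'a set) \<Rightarrow> ('s::finite \<Rightarrow> ('p \<Rightarrow> 'a) \<Rightarrow> 's \<Rightarrow> real)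
    \<Rightarrow> ('p \<Rightarrow> 's \<Rightarrow> ('p \<Rightarrow> 'a) \<Rightarrow> real) \<Rightarrow> ('s \<Rightarrow> real) \<Rightarrow> 'p
    \<Rightarrow> ('p \<Rightarrow> 's \<Rightarrow> 'a \<Rightarrow> real) \<Rightarrow> real" where
  "value_fn AS P r rho i pol =
     (\<Sum>t. \<Sum>s\<in>UNIV. \<Sum>a\<in>joint_actions AS. occ AS P rho pol t s * joint_weight pol s a * r i s a)"

definition vgrad :: "('p::finite \<Rightarrow> 'a set) \<Rightarrow> ('s::finite \<Rightarrow> ('p \<Rightarrow> 'a) \<Rightarrow> 's \<Rightarrow> real)
    \<Rightarrow> ('p \<Rightarrow> 's \<Rightarrow> ('p \<Rightarrow> 'a) \<Rightarrow> real) \<Rightarrow> ('s \<Rightarrow> real) \<Rightarrow> 'p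
    \<Rightarrow> ('p \<Rightarrow> 's \<Rightarrow> 'a \<Rightarrow> real) \<Rightarrow> 's \<Rightarrow> 'a \<Rightarrow> real" where
  "vgrad AS P r rho i pol s b =
     deriv (\<lambda>x. value_fn AS P r rho i (pol(i := (pol i)(s := (pol i s)(b := x))))) (pol i s b)"

definition zeta_min :: "('p::finite \<Rightarrow> 'a set) \<Rightarrow> ('s::finite \<Rightarrow> ('p \<Rightarrow> 'a) \<Rightarrow> 's \<Rightarrow> real) \<Rightarrow> real" where
  "zeta_min AS P = Min {1 - (\<Sum>s'\<in>UNIV. P s a s') | s a. a \<in> joint_actions AS}"

definition is_policy :: "('p::finite \<Rightarrow> 'a set) \<Rightarrow> ('p \<Rightarrow> 's::finite \<Rightarrow> 'a \<Rightarrow> real) \<Rightarrow> bool" where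
  "is_policy AS pol \<longleftrightarrow> (\<forall>i s. (\<forall>b\<in>AS i. pol i s b \<ge> 0) \<and> (\<Sum>b\<in>AS i. pol i s b) = 1)"

definition norm_i :: "'a set \<Rightarrow> ('s::finite \<Rightarrow> 'a \<Rightarrow> real) \<Rightarrow> real" where
  "norm_i B f = sqrt (\<Sum>s\<in>UNIV. \<Sum>b\<in>B. (f s b)\<^sup>2)"

definition norm_all :: "('p::finite \<Rightarrow> 'a set) \<Rightarrow> ('p \<Rightarrow> 's::finite \<Rightarrow> 'a \<Rightarrow> real) \<Rightarrow> real" where
  "norm_all AS f = sqrt (\<Sum>i\<in>UNIV. \<Sum>s\<in>UNIV. \<Sum>b\<in>AS i. (f i s b)\<^sup>2)"

end

theory Submission
  imports Defs
begin

text \<open>The value of a profile \<open>\<pi>\<close> is the expected reward integrated against the occupation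
  measure \<open>d\<^sub>\<pi> = \<rho> (I - K\<^sub>\<pi>)\<^sup>-\<^sup>1\<close>, where the state kernel \<open>K\<^sub>\<pi>\<close> has row sums at most
  \<open>1 - \<zeta>\<close>; hence \<open>\<parallel>d\<^sub>\<pi>\<parallel>\<^sub>1 \<le> 1/\<zeta>\<close> and all state and action values are bounded by \<open>1/\<zeta>\<close>.
  By the policy gradient theorem the \<open>(s, b)\<close> entry of \<open>v\<^sub>i(\<pi>)\<close> is \<open>d\<^sub>\<pi>(s) Q\<^sub>i\<^sup>\<pi>(s, b)\<close>, where
  \<open>Q\<^sub>i\<^sup>\<pi>(s, b)\<close> is player \<open>i\<close>'s action value.  Let \<open>D\<close> bound
  \<open>\<Sum>\<^sub>j \<parallel>\<pi>\<^sub>j(s) - \<pi>'\<^sub>j(s)\<parallel>\<^sub>1\<close> uniformly in \<open>s\<close>; by Cauchy--Schwarz one may take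
  \<open>D = \<Sum>\<^sub>j \<surd>A\<^sub>j \<parallel>\<pi>\<^sub>j - \<pi>'\<^sub>j\<parallel>\<close>.  The joint action distributions of the two profiles are then
  \<open>D\<close>-close in \<open>\<ell>\<^sub>1\<close> (product distributions), so the resolvent identity gives
  \<open>\<parallel>d\<^sub>\<pi> - d\<^sub>\<pi>\<^sub>'\<parallel>\<^sub>1 \<le> D/\<zeta>\<^sup>2\<close>, and the performance difference lemma gives
  \<open>|Q\<^sup>\<pi> - Q\<^sup>\<pi>\<^sup>'| \<le> D/\<zeta> + D/\<zeta>\<^sup>2\<close>.  Summing over states, the entries of \<open>v\<^sub>i(\<pi>) - v\<^sub>i(\<pi>')\<close> at
  fixed \<open>b\<close> have total size at most \<open>3D/\<zeta>\<^sup>3\<close>, which yields the per-player bound; the bound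
  for the whole profile follows by Cauchy--Schwarz once more.\<close>

section \<open>Occupation measures of substochastic kernels\<close>

definition l1_norm :: "('s::finite \<Rightarrow> real) \<Rightarrow> real" where
  "l1_norm y = (\<Sum>s\<in>UNIV. \<bar>y s\<bar>)"

definition push_forward :: "('s::finite \<Rightarrow> 's \<Rightarrow> real) \<Rightarrow> ('s \<Rightarrow> real) \<Rightarrow> 's \<Rightarrow> real" where
  "push_forward K y = (\<lambda>s'. \<Sum>s\<in>UNIV. y s * K s s')"

definition occupation :: "('s::finite \<Rightarrow> 's \<Rightarrow> real) \<Rightarrow> ('s \<Rightarrow> real) \<Rightarrow> 's \<Rightarrow> real" where
  "occupation K \<mu> = (\<lambda>s. \<Sum>t. (push_forward K ^^ t) \<mu> s)"

lemma l1_norm_nonneg: "0 \<le> l1_norm y"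
  by (simp add: l1_norm_def sum_nonneg)

lemma abs_le_l1_norm: "\<bar>y s\<bar> \<le> l1_norm y"
  unfolding l1_norm_def by (rule member_le_sum) auto

lemma l1_norm_add_le: "l1_norm (\<lambda>s. y s + z s) \<le> l1_norm y + l1_norm z"
  unfolding l1_norm_def by (simp add: sum.distrib[symmetric] sum_mono abs_triangle_ineq)

lemma l1_norm_indicator [simp]: "l1_norm (indicator {s} :: _ \<Rightarrow> real) = 1"
  by (simp add: l1_norm_def indicator_def)

lemma sum_abs_mult_le:
  fixes f g :: "'b \<Rightarrow> real"
  assumes "\<And>x. x \<in> A \<Longrightarrow> \<bar>g x\<bar> \<le> B"
  shows "\<bar>\<Sum>x\<in>A. f x * g x\<bar> \<le> (\<Sum>x\<in>A. \<bar>f x\<bar>) * B"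
proof -
  have "\<bar>\<Sum>x\<in>A. f x * g x\<bar> \<le> (\<Sum>x\<in>A. \<bar>f x\<bar> * \<bar>g x\<bar>)"
    by (rule order_trans[OF sum_abs]) (simp add: abs_mult)
  also have "\<dots> \<le> (\<Sum>x\<in>A. \<bar>f x\<bar> * B)"
    using assms by (intro sum_mono mult_left_mono) auto
  finally show ?thesis by (simp add: sum_distrib_right)
qed

lemma l1_norm_push_forward_le:
  assumes "\<And>s. (\<Sum>s'\<in>UNIV. \<bar>K s s'\<bar>) \<le> q"
  shows "l1_norm (push_forward K y) \<le> q * l1_norm y"
proof -
  have "l1_norm (push_forward K y) \<le> (\<Sum>s'\<in>UNIV. \<Sum>s\<in>UNIV. \<bar>y s\<bar> * \<bar>K s s'\<bar>)"
    unfolding l1_norm_def push_forward_def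
    by (intro sum_mono order_trans[OF sum_abs]) (simp add: abs_mult)
  also have "\<dots> = (\<Sum>s\<in>UNIV. \<bar>y s\<bar> * (\<Sum>s'\<in>UNIV. \<bar>K s s'\<bar>))"
    by (subst sum.swap) (simp add: sum_distrib_left)
  also have "\<dots> \<le> (\<Sum>s\<in>UNIV. \<bar>y s\<bar> * q)"
    using assms by (intro sum_mono mult_left_mono) auto
  also have "\<dots> = q * l1_norm y"
    by (simp add: l1_norm_def sum_distrib_left mult.commute)
  finally show ?thesis .
qed

locale contractive_kernel =
  fixes K :: "'s::finite \<Rightarrow> 's \<Rightarrow> real" and q :: real
  assumes row_abs_sum_le: "\<And>s. (\<Sum>s'\<in>UNIV. \<bar>K s s'\<bar>) \<le> q"
    and less_1: "q < 1"
begin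

lemma nonneg: "0 \<le> q"
  using row_abs_sum_le[of undefined] by (meson abs_ge_zero order_trans sum_nonneg)

lemma l1_norm_push_forward_contracts: "l1_norm (push_forward K y) \<le> q * l1_norm y"
  by (rule l1_norm_push_forward_le) (rule row_abs_sum_le)

lemma l1_norm_iterate_le: "l1_norm ((push_forward K ^^ t) \<mu>) \<le> q ^ t * l1_norm \<mu>"
proof (induction t)
  case (Suc t)
  have "l1_norm ((push_forward K ^^ Suc t) \<mu>) \<le> q * l1_norm ((push_forward K ^^ t) \<mu>)"
    using l1_norm_push_forward_contracts by simp
  also have "\<dots> \<le> q * (q ^ t * l1_norm \<mu>)"
    using Suc nonneg by (rule mult_left_mono)
  finally show ?case by simp
qed simp

lemma summable_iterate: "summable (\<lambda>t. (push_forward K ^^ t) \<mu> s)"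
proof (rule summable_comparison_test)
  show "\<exists>N. \<forall>t\<ge>N. norm ((push_forward K ^^ t) \<mu> s) \<le> q ^ t * l1_norm \<mu>"
    using abs_le_l1_norm l1_norm_iterate_le by (metis order_trans real_norm_def)
  show "summable (\<lambda>t. q ^ t * l1_norm \<mu>)"
    using nonneg less_1 by (intro summable_mult2 summable_geometric) auto
qed

text \<open>The occupation measure solves the linear equation \<open>d = \<mu> + d K\<close>, and it is its only
  solution because \<open>y \<mapsto> y K\<close> is a contraction in the \<open>\<ell>\<^sub>1\<close> norm.\<close>

lemma occupation_unfold: "occupation K \<mu> s = \<mu> s + push_forward K (occupation K \<mu>) s"
proof -
  have "occupation K \<mu> s = \<mu> s + (\<Sum>t. (push_forward K ^^ Suc t) \<mu> s)"
    using suminf_split_head[OF summable_iterate] by (simp add: occupation_def)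
  also have "(\<Sum>t. (push_forward K ^^ Suc t) \<mu> s)
      = (\<Sum>t. \<Sum>s'\<in>UNIV. (push_forward K ^^ t) \<mu> s' * K s' s)"
    by (simp add: push_forward_def)
  also have "\<dots> = (\<Sum>s'\<in>UNIV. \<Sum>t. (push_forward K ^^ t) \<mu> s' * K s' s)"
    by (intro suminf_sum summable_mult2 summable_iterate)
  also have "\<dots> = push_forward K (occupation K \<mu>) s"
    by (simp add: push_forward_def occupation_def suminf_mult2[OF summable_iterate])
  finally show ?thesis .
qed

lemma occupation_unique:
  assumes y: "\<And>s. y s = \<mu> s + push_forward K y s"
  shows "y = occupation K \<mu>"
proof -
  define e where "e s = y s - occupation K \<mu> s" for s
  have "e s = push_forward K e s" for s
  proof -
    have "e s = push_forward K y s - push_forward K (occupation K \<mu>) s"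
      using y[of s] occupation_unfold[of \<mu> s] by (simp add: e_def)
    also have "\<dots> = push_forward K e s"
      by (simp add: e_def push_forward_def sum_subtractf[symmetric] left_diff_distrib)
    finally show ?thesis .
  qed
  hence "e = push_forward K e"
    by (rule ext)
  hence "l1_norm e \<le> q * l1_norm e"
    using l1_norm_push_forward_contracts[of e] by simp
  hence "l1_norm e \<le> 0"
    using less_1 l1_norm_nonneg[of e] by (simp add: mult_le_cancel_right1)
  hence "e s = 0" for s
    using abs_le_l1_norm[of e s] by simp
  thus ?thesis by (auto simp: e_def)
qed

lemma l1_norm_occupation_le: "l1_norm (occupation K \<mu>) \<le> l1_norm \<mu> / (1 - q)"
proof -
  have "l1_norm (occupation K \<mu>) \<le> l1_norm \<mu> + l1_norm (push_forward K (occupation K \<mu>))"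
    using l1_norm_add_le[of \<mu> "push_forward K (occupation K \<mu>)"]
    by (subst (1) occupation_unfold[abs_def]) simp
  also have "\<dots> \<le> l1_norm \<mu> + q * l1_norm (occupation K \<mu>)"
    using l1_norm_push_forward_contracts by simp
  finally have "(1 - q) * l1_norm (occupation K \<mu>) \<le> l1_norm \<mu>"
    by (simp add: algebra_simps)
  thus ?thesis
    using less_1 by (simp add: pos_le_divide_eq mult.commute)
qed

lemma occupation_nonneg:
  assumes "\<And>s s'. 0 \<le> K s s'" and "\<And>s. 0 \<le> \<mu> s"
  shows "0 \<le> occupation K \<mu> s"
proof -
  have "0 \<le> (push_forward K ^^ t) \<mu> s" for t s
    using assms by (induction t arbitrary: s) (auto simp: push_forward_def intro!: sum_nonneg)
  thus ?thesis
    unfolding occupation_def by (intro suminf_nonneg summable_iterate)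
qed

lemma occupation_linear:
  "occupation K \<mu> s = (\<Sum>s'\<in>UNIV. \<mu> s' * occupation K (indicator {s'}) s)"
proof -
  define y where "y s = (\<Sum>s'\<in>UNIV. \<mu> s' * occupation K (indicator {s'}) s)" for s
  have "y s = \<mu> s + push_forward K y s" for s
  proof -
    have "y s = (\<Sum>s'\<in>UNIV. \<mu> s' * indicator {s'} s)
        + (\<Sum>s'\<in>UNIV. \<mu> s' * push_forward K (occupation K (indicator {s'})) s)"
      unfolding y_def
      by (subst occupation_unfold) (simp add: distrib_left sum.distrib)
    also have "(\<Sum>s'\<in>UNIV. \<mu> s' * indicator {s'} s) = \<mu> s"
      by (simp add: indicator_def)
    also have "(\<Sum>s'\<in>UNIV. \<mu> s' * push_forward K (occupation K (indicator {s'})) s)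
        = push_forward K y s"
      unfolding push_forward_def y_def sum_distrib_left sum_distrib_right mult.assoc
      by (rule sum.swap)
    finally show ?thesis .
  qed
  hence "y = occupation K \<mu>"
    by (rule occupation_unique)
  from fun_cong[OF this, of s] show ?thesis
    by (simp add: y_def)
qed

end

lemma occupation_diff:
  assumes "contractive_kernel K q" and "contractive_kernel K' q'"
  shows "occupation K \<mu> s - occupation K' \<mu> s
    = occupation K' (push_forward (\<lambda>s s'. K s s' - K' s s') (occupation K \<mu>)) s"
proof -
  interpret K: contractive_kernel K q by fact
  interpret K': contractive_kernel K' q' by fact
  define y where "y s = occupation K \<mu> s - occupation K' \<mu> s" for s
  have "y s = push_forward (\<lambda>s s'. K s s' - K' s s') (occupation K \<mu>) s + push_forward K' y s" for s
    using K.occupation_unfold[of \<mu> s] K'.occupation_unfold[of \<mu> s]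
    by (simp add: y_def push_forward_def sum_subtractf[symmetric] sum.distrib[symmetric] algebra_simps)
  from K'.occupation_unique[OF this] show ?thesis
    by (simp add: y_def fun_eq_iff)
qed

section \<open>Stopping games\<close>

locale stopping_game =
  fixes AS :: "'p::finite \<Rightarrow> 'a set" and P :: "'s::finite \<Rightarrow> ('p \<Rightarrow> 'a) \<Rightarrow> 's \<Rightarrow> real"
  assumes finite_actions: "\<And>i. finite (AS i)" and actions_nonempty: "\<And>i. AS i \<noteq> {}"
    and P_nonneg: "\<And>s a s'. a \<in> joint_actions AS \<Longrightarrow> P s a s' \<ge> 0"
    and zeta_pos: "zeta_min AS P > 0"
begin

abbreviation "JA \<equiv> joint_actions AS"
abbreviation "\<zeta> \<equiv> zeta_min AS P"

text \<open>The weights \<open>w s a\<close> on joint actions are arbitrary reals, not only product distributions: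
  the partial derivatives defining \<^const>\<open>vgrad\<close> leave the simplex.\<close>

definition trans_kernel :: "('s \<Rightarrow> ('p \<Rightarrow> 'a) \<Rightarrow> real) \<Rightarrow> 's \<Rightarrow> 's \<Rightarrow> real" where
  "trans_kernel w s s' = (\<Sum>a\<in>JA. w s a * P s a s')"

definition expected_reward ::
    "('s \<Rightarrow> ('p \<Rightarrow> 'a) \<Rightarrow> real) \<Rightarrow> ('s \<Rightarrow> ('p \<Rightarrow> 'a) \<Rightarrow> real) \<Rightarrow> 's \<Rightarrow> real" where
  "expected_reward rr w s = (\<Sum>a\<in>JA. w s a * rr s a)"

definition total_reward ::
    "('s \<Rightarrow> ('p \<Rightarrow> 'a) \<Rightarrow> real) \<Rightarrow> ('s \<Rightarrow> ('p \<Rightarrow> 'a) \<Rightarrow> real) \<Rightarrow> ('s \<Rightarrow> real) \<Rightarrow> real" where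
  "total_reward rr w \<mu> = (\<Sum>s\<in>UNIV. occupation (trans_kernel w) \<mu> s * expected_reward rr w s)"

definition state_value ::
    "('s \<Rightarrow> ('p \<Rightarrow> 'a) \<Rightarrow> real) \<Rightarrow> ('s \<Rightarrow> ('p \<Rightarrow> 'a) \<Rightarrow> real) \<Rightarrow> 's \<Rightarrow> real" where
  "state_value rr w s = total_reward rr w (indicator {s})"

definition action_value ::
    "('s \<Rightarrow> ('p \<Rightarrow> 'a) \<Rightarrow> real) \<Rightarrow> ('s \<Rightarrow> ('p \<Rightarrow> 'a) \<Rightarrow> real) \<Rightarrow> 's \<Rightarrow> ('p \<Rightarrow> 'a) \<Rightarrow> real" where
  "action_value rr w s a = rr s a + (\<Sum>s'\<in>UNIV. P s a s' * state_value rr w s')"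

lemma finite_joint_actions: "finite JA"
  unfolding joint_actions_def using finite_actions by (simp add: finite_PiE)

lemma sum_P_le:
  assumes "a \<in> JA"
  shows "(\<Sum>s'\<in>UNIV. P s a s') \<le> 1 - \<zeta>"
proof -
  have "finite ((\<lambda>(s, a). 1 - (\<Sum>s'\<in>UNIV. P s a s')) ` (UNIV \<times> JA))"
    using finite_joint_actions by simp
  moreover have "{1 - (\<Sum>s'\<in>UNIV. P s a s') | s a. a \<in> JA}
      = (\<lambda>(s, a). 1 - (\<Sum>s'\<in>UNIV. P s a s')) ` (UNIV \<times> JA)"
    by auto
  ultimately have "\<zeta> \<le> 1 - (\<Sum>s'\<in>UNIV. P s a s')"
    unfolding zeta_min_def using assms by (intro Min_le) auto
  thus ?thesis by simp
qed

lemma zeta_le_1: "\<zeta> \<le> 1"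
proof -
  obtain a where a: "a \<in> JA"
    using actions_nonempty unfolding joint_actions_def by (metis PiE_eq_empty_iff ex_in_conv)
  have "0 \<le> (\<Sum>s'\<in>UNIV. P undefined a s')"
    using P_nonneg[OF a] by (simp add: sum_nonneg)
  with sum_P_le[OF a, of undefined] show ?thesis by linarith
qed

lemma row_abs_sum_trans_kernel_le:
  assumes "\<And>s. (\<Sum>a\<in>JA. \<bar>w s a\<bar>) \<le> M"
  shows "(\<Sum>s'\<in>UNIV. \<bar>trans_kernel w s s'\<bar>) \<le> (1 - \<zeta>) * M"
proof -
  have "(\<Sum>s'\<in>UNIV. \<bar>trans_kernel w s s'\<bar>) \<le> (\<Sum>s'\<in>UNIV. \<Sum>a\<in>JA. \<bar>w s a\<bar> * P s a s')"
    unfolding trans_kernel_def by (intro sum_mono order_trans[OF sum_abs]) (simp add: abs_mult P_nonneg)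
  also have "\<dots> = (\<Sum>a\<in>JA. \<bar>w s a\<bar> * (\<Sum>s'\<in>UNIV. P s a s'))"
    by (subst sum.swap) (simp add: sum_distrib_left)
  also have "\<dots> \<le> (\<Sum>a\<in>JA. \<bar>w s a\<bar> * (1 - \<zeta>))"
    by (intro sum_mono mult_left_mono sum_P_le) auto
  also have "\<dots> = (1 - \<zeta>) * (\<Sum>a\<in>JA. \<bar>w s a\<bar>)"
    by (simp add: sum_distrib_left mult.commute)
  also have "\<dots> \<le> (1 - \<zeta>) * M"
    using assms[of s] zeta_le_1 by (intro mult_left_mono) auto
  finally show ?thesis .
qed

lemma contractive_kernel_trans_kernel:
  assumes "\<And>s. (\<Sum>a\<in>JA. \<bar>w s a\<bar>) \<le> M" and "(1 - \<zeta>) * M < 1"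
  shows "contractive_kernel (trans_kernel w) ((1 - \<zeta>) * M)"
  using row_abs_sum_trans_kernel_le[OF assms(1)] assms(2) by unfold_locales

lemma trans_kernel_diff:
  "trans_kernel w s s' - trans_kernel w' s s' = trans_kernel (\<lambda>s a. w s a - w' s a) s s'"
  unfolding trans_kernel_def by (simp add: sum_subtractf[symmetric] algebra_simps)

lemma occ_eq_iterate: "occ AS P rho pol t = (push_forward (trans_kernel (joint_weight pol)) ^^ t) rho"
  by (induction t) (simp_all add: fun_eq_iff push_forward_def trans_kernel_def sum_distrib_left mult.assoc)

lemma value_fn_eq_total_reward:
  assumes "contractive_kernel (trans_kernel (joint_weight pol)) q"
  shows "value_fn AS P r rho i pol = total_reward (r i) (joint_weight pol) rho"
proof -
  interpret contractive_kernel "trans_kernel (joint_weight pol)" q by fact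
  have "value_fn AS P r rho i pol = (\<Sum>t. \<Sum>s\<in>UNIV.
      (push_forward (trans_kernel (joint_weight pol)) ^^ t) rho s * expected_reward (r i) (joint_weight pol) s)"
    unfolding value_fn_def occ_eq_iterate expected_reward_def by (simp add: sum_distrib_left mult.assoc)
  also have "\<dots> = total_reward (r i) (joint_weight pol) rho"
    unfolding total_reward_def occupation_def
    by (subst suminf_sum) (auto intro!: summable_mult2 summable_iterate simp: suminf_mult2[OF summable_iterate])
  finally show ?thesis .
qed

lemma total_reward_eq_sum_state_value:
  assumes "contractive_kernel (trans_kernel w) q"
  shows "total_reward rr w \<nu> = (\<Sum>s\<in>UNIV. \<nu> s * state_value rr w s)"
proof -
  interpret contractive_kernel "trans_kernel w" q by fact
  have "total_reward rr w \<nu> = (\<Sum>s\<in>UNIV.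
      (\<Sum>s'\<in>UNIV. \<nu> s' * occupation (trans_kernel w) (indicator {s'}) s) * expected_reward rr w s)"
    unfolding total_reward_def by (simp only: occupation_linear[of \<nu>])
  also have "\<dots> = (\<Sum>s\<in>UNIV. \<nu> s * state_value rr w s)"
    unfolding state_value_def total_reward_def sum_distrib_left sum_distrib_right mult.assoc
    by (rule sum.swap)
  finally show ?thesis .
qed

lemma performance_difference:
  assumes K: "contractive_kernel (trans_kernel w) q" and K': "contractive_kernel (trans_kernel w') q'"
  shows "total_reward rr w \<mu> - total_reward rr w' \<mu>
    = (\<Sum>s\<in>UNIV. occupation (trans_kernel w) \<mu> s * (\<Sum>a\<in>JA. (w s a - w' s a) * action_value rr w' s a))"
proof -
  define d where "d = occupation (trans_kernel w) \<mu>"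
  define d' where "d' = occupation (trans_kernel w') \<mu>"
  define \<nu> where "\<nu> = push_forward (trans_kernel (\<lambda>s a. w s a - w' s a)) d"
  define U where "U s a = (\<Sum>s'\<in>UNIV. P s a s' * state_value rr w' s')" for s a
  have "total_reward rr w \<mu> - total_reward rr w' \<mu>
      = (\<Sum>s\<in>UNIV. d s * (expected_reward rr w s - expected_reward rr w' s))
        + (\<Sum>s\<in>UNIV. (d s - d' s) * expected_reward rr w' s)"
    unfolding total_reward_def d_def d'_def
    by (simp add: sum_subtractf[symmetric] sum.distrib[symmetric] algebra_simps)
  also have "(\<Sum>s\<in>UNIV. (d s - d' s) * expected_reward rr w' s) = total_reward rr w' \<nu>"
    unfolding total_reward_def d_def d'_def \<nu>_def occupation_diff[OF K K'] trans_kernel_diff ..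
  also have "\<dots> = (\<Sum>s'\<in>UNIV. \<nu> s' * state_value rr w' s')"
    by (rule total_reward_eq_sum_state_value[OF K'])
  also have "\<dots> = (\<Sum>s'\<in>UNIV. \<Sum>s\<in>UNIV. \<Sum>a\<in>JA. d s * (w s a - w' s a) * P s a s' * state_value rr w' s')"
    unfolding \<nu>_def push_forward_def trans_kernel_def
    by (simp add: sum_distrib_left sum_distrib_right mult.assoc)
  also have "\<dots> = (\<Sum>s\<in>UNIV. \<Sum>a\<in>JA. \<Sum>s'\<in>UNIV. d s * (w s a - w' s a) * P s a s' * state_value rr w' s')"
    by (subst sum.swap) (intro sum.cong refl sum.swap)
  also have "\<dots> = (\<Sum>s\<in>UNIV. d s * (\<Sum>a\<in>JA. (w s a - w' s a) * U s a))"
    by (simp add: U_def sum_distrib_left mult.assoc)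
  also have "(\<Sum>s\<in>UNIV. d s * (expected_reward rr w s - expected_reward rr w' s))
      + (\<Sum>s\<in>UNIV. d s * (\<Sum>a\<in>JA. (w s a - w' s a) * U s a))
      = (\<Sum>s\<in>UNIV. d s * (\<Sum>a\<in>JA. (w s a - w' s a) * action_value rr w' s a))"
    unfolding action_value_def expected_reward_def U_def
    by (simp add: sum.distrib[symmetric] sum_subtractf[symmetric] distrib_left[symmetric] algebra_simps)
  finally show ?thesis
    by (simp add: d_def)
qed

lemma joint_weight_nonneg:
  assumes "is_policy AS \<sigma>" and "a \<in> JA"
  shows "0 \<le> joint_weight \<sigma> s a"
  using assms unfolding is_policy_def joint_weight_def joint_actions_def
  by (auto intro!: prod_nonneg)

lemma sum_joint_weight:
  assumes "is_policy AS \<sigma>"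
  shows "(\<Sum>a\<in>JA. joint_weight \<sigma> s a) = 1"
proof -
  have "(\<Sum>a\<in>JA. joint_weight \<sigma> s a) = (\<Prod>j\<in>UNIV. \<Sum>b\<in>AS j. \<sigma> j s b)"
    unfolding joint_weight_def joint_actions_def
    by (rule prod_sum_PiE[symmetric]) (auto simp: finite_actions)
  also have "\<dots> = 1"
    using assms by (simp add: is_policy_def)
  finally show ?thesis .
qed

lemma sum_abs_joint_weight:
  assumes "is_policy AS \<sigma>"
  shows "(\<Sum>a\<in>JA. \<bar>joint_weight \<sigma> s a\<bar>) = 1"
  using sum_joint_weight[OF assms] joint_weight_nonneg[OF assms] by simp

lemma contractive_kernel_policy:
  assumes "is_policy AS \<sigma>"
  shows "contractive_kernel (trans_kernel (joint_weight \<sigma>)) (1 - \<zeta>)"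
  using contractive_kernel_trans_kernel[of "joint_weight \<sigma>" 1] sum_abs_joint_weight[OF assms] zeta_pos
  by simp

lemma trans_kernel_policy_nonneg:
  assumes "is_policy AS \<sigma>"
  shows "0 \<le> trans_kernel (joint_weight \<sigma>) s s'"
  unfolding trans_kernel_def using joint_weight_nonneg[OF assms] P_nonneg by (auto intro!: sum_nonneg)

lemma occupation_policy_nonneg:
  assumes "is_policy AS \<sigma>" and "\<And>s. 0 \<le> \<mu> s"
  shows "0 \<le> occupation (trans_kernel (joint_weight \<sigma>)) \<mu> s"
  using contractive_kernel.occupation_nonneg[OF contractive_kernel_policy[OF assms(1)]]
    trans_kernel_policy_nonneg[OF assms(1)] assms(2) by blast

lemma l1_norm_occupation_policy_le:
  assumes "is_policy AS \<sigma>"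
  shows "l1_norm (occupation (trans_kernel (joint_weight \<sigma>)) \<mu>) \<le> l1_norm \<mu> / \<zeta>"
  using contractive_kernel.l1_norm_occupation_le[OF contractive_kernel_policy[OF assms]] by simp

end

section \<open>The policy gradient\<close>

definition set_entry ::
    "('p \<Rightarrow> 's \<Rightarrow> 'a \<Rightarrow> real) \<Rightarrow> 'p \<Rightarrow> 's \<Rightarrow> 'a \<Rightarrow> real \<Rightarrow> 'p \<Rightarrow> 's \<Rightarrow> 'a \<Rightarrow> real" where
  "set_entry pol i s b x = pol(i := (pol i)(s := (pol i s)(b := x)))"

definition pure_at :: "('p \<Rightarrow> 's \<Rightarrow> 'a \<Rightarrow> real) \<Rightarrow> 'p \<Rightarrow> 's \<Rightarrow> 'a \<Rightarrow> 'p \<Rightarrow> 's \<Rightarrow> 'a \<Rightarrow> real" where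
  "pure_at pol i s b = pol(i := (pol i)(s := indicator {b}))"

lemma has_real_derivative_local_slope:
  fixes f h :: "real \<Rightarrow> real"
  assumes "0 < e"
    and slope: "\<And>x. \<bar>x - x0\<bar> \<le> e \<Longrightarrow> f x - f x0 = (x - x0) * h x"
    and lipschitz: "\<And>x. \<bar>x - x0\<bar> \<le> e \<Longrightarrow> \<bar>h x - h x0\<bar> \<le> C * \<bar>x - x0\<bar>"
  shows "(f has_real_derivative h x0) (at x0)"
  unfolding has_field_derivative_iff
proof (rule Lim_transform_eventually)
  have "((\<lambda>x. h x - h x0) \<longlongrightarrow> 0) (at x0)"
  proof (rule Lim_null_comparison)
    show "\<forall>\<^sub>F x in at x0. norm (h x - h x0) \<le> C * \<bar>x - x0\<bar>"
      unfolding eventually_at using assms(1) lipschitz by (intro exI[of _ e]) (auto simp: dist_real_def)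
    have "((\<lambda>x. C * \<bar>x - x0\<bar>) \<longlongrightarrow> C * \<bar>x0 - x0\<bar>) (at x0)"
      by (intro tendsto_intros)
    thus "((\<lambda>x. C * \<bar>x - x0\<bar>) \<longlongrightarrow> 0) (at x0)"
      by simp
  qed
  thus "(h \<longlongrightarrow> h x0) (at x0)"
    by (rule LIM_zero_cancel)
  show "\<forall>\<^sub>F x in at x0. h x = (f x - f x0) / (x - x0)"
    unfolding eventually_at using assms(1) slope by (intro exI[of _ e]) (auto simp: dist_real_def)
qed

lemma joint_weight_set_entry:
  "joint_weight (set_entry pol i s0 b x) s a = joint_weight pol s a
     + (if s = s0 then (x - pol i s0 b) * joint_weight (pure_at pol i s0 b) s a else 0)"
proof -
  have split: "joint_weight f s a = f i s (a i) * (\<Prod>j\<in>UNIV - {i}. f j s (a j))" for f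
    unfolding joint_weight_def by (simp add: prod.remove)
  have others: "(\<Prod>j\<in>UNIV - {i}. f j s (a j)) = (\<Prod>j\<in>UNIV - {i}. pol j s (a j))"
    if "\<And>j. j \<noteq> i \<Longrightarrow> f j = pol j" for f
    using that by (intro prod.cong) auto
  show ?thesis
    unfolding split[of "set_entry pol i s0 b x"] split[of "pure_at pol i s0 b"] split[of pol]
    by (subst (1 2) others) (auto simp: set_entry_def pure_at_def algebra_simps)
qed

context stopping_game
begin

definition player_action_value ::
    "('s \<Rightarrow> ('p \<Rightarrow> 'a) \<Rightarrow> real) \<Rightarrow> ('p \<Rightarrow> 's \<Rightarrow> 'a \<Rightarrow> real) \<Rightarrow> 'p \<Rightarrow> 's \<Rightarrow> 'a \<Rightarrow> real" where
  "player_action_value rr \<sigma> i s b =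
     (\<Sum>a\<in>JA. joint_weight (pure_at \<sigma> i s b) s a * action_value rr (joint_weight \<sigma>) s a)"

lemma is_policy_pure_at:
  assumes "is_policy AS pol" and "b \<in> AS i"
  shows "is_policy AS (pure_at pol i s b)"
  using assms finite_actions[of i] unfolding is_policy_def pure_at_def by (auto simp: indicator_def)

lemma sum_abs_joint_weight_set_entry_diff:
  assumes "is_policy AS pol" and "b \<in> AS i"
  shows "(\<Sum>a\<in>JA. \<bar>joint_weight (set_entry pol i s0 b x) s a - joint_weight pol s a\<bar>) \<le> \<bar>x - pol i s0 b\<bar>"
proof (cases "s = s0")
  case True
  have "(\<Sum>a\<in>JA. \<bar>joint_weight (set_entry pol i s0 b x) s a - joint_weight pol s a\<bar>)
      = \<bar>x - pol i s0 b\<bar> * (\<Sum>a\<in>JA. joint_weight (pure_at pol i s0 b) s a)"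
    using True joint_weight_nonneg[OF is_policy_pure_at[OF assms]]
    by (simp add: joint_weight_set_entry abs_mult sum_distrib_left)
  also have "\<dots> = \<bar>x - pol i s0 b\<bar>"
    using sum_joint_weight[OF is_policy_pure_at[OF assms]] by simp
  finally show ?thesis by simp
qed (simp add: joint_weight_set_entry)

lemma contractive_kernel_set_entry:
  assumes pol: "is_policy AS pol" and b: "b \<in> AS i" and x: "\<bar>x - pol i s0 b\<bar> \<le> \<zeta>"
  shows "contractive_kernel (trans_kernel (joint_weight (set_entry pol i s0 b x))) (1 - \<zeta>\<^sup>2)"
proof -
  have "(\<Sum>a\<in>JA. \<bar>joint_weight (set_entry pol i s0 b x) s a\<bar>) \<le> 1 + \<zeta>" for s
  proof -
    have "(\<Sum>a\<in>JA. \<bar>joint_weight (set_entry pol i s0 b x) s a\<bar>)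
        \<le> (\<Sum>a\<in>JA. \<bar>joint_weight pol s a\<bar>)
          + (\<Sum>a\<in>JA. \<bar>joint_weight (set_entry pol i s0 b x) s a - joint_weight pol s a\<bar>)"
      by (simp add: sum.distrib[symmetric] sum_mono abs_triangle_ineq2_sym)
    thus ?thesis
      using sum_abs_joint_weight[OF pol, of s] sum_abs_joint_weight_set_entry_diff[OF pol b, of s0 x s] x
      by linarith
  qed
  moreover have "(1 - \<zeta>) * (1 + \<zeta>) = 1 - \<zeta>\<^sup>2"
    by (simp add: power2_eq_square algebra_simps)
  ultimately show ?thesis
    using contractive_kernel_trans_kernel[of _ "1 + \<zeta>"] zeta_pos by simp
qed

lemma value_fn_set_entry_diff:
  assumes pol: "is_policy AS pol" and b: "b \<in> AS i" and x: "\<bar>x - pol i s0 b\<bar> \<le> \<zeta>"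
  shows "value_fn AS P r rho i (set_entry pol i s0 b x) - value_fn AS P r rho i pol
    = (x - pol i s0 b) * (occupation (trans_kernel (joint_weight (set_entry pol i s0 b x))) rho s0
        * player_action_value (r i) pol i s0 b)"
proof -
  let ?wx = "joint_weight (set_entry pol i s0 b x)" and ?w = "joint_weight pol"
  note Kx = contractive_kernel_set_entry[OF pol b x] and K = contractive_kernel_policy[OF pol]
  have "value_fn AS P r rho i (set_entry pol i s0 b x) - value_fn AS P r rho i pol
      = total_reward (r i) ?wx rho - total_reward (r i) ?w rho"
    using value_fn_eq_total_reward[OF Kx] value_fn_eq_total_reward[OF K] by simp
  also have "\<dots> = (\<Sum>s\<in>UNIV. occupation (trans_kernel ?wx) rho s
      * (\<Sum>a\<in>JA. (?wx s a - ?w s a) * action_value (r i) ?w s a))"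
    by (rule performance_difference[OF Kx K])
  also have "\<dots> = (\<Sum>s\<in>UNIV. occupation (trans_kernel ?wx) rho s
      * (if s = s0 then (x - pol i s0 b) * player_action_value (r i) pol i s0 b else 0))"
    unfolding joint_weight_set_entry player_action_value_def
    by (intro sum.cong refl) (auto simp: sum_distrib_left mult.assoc)
  finally show ?thesis
    by (simp add: if_distrib cong: if_cong)
qed

lemma occupation_set_entry_lipschitz:
  assumes pol: "is_policy AS pol" and b: "b \<in> AS i" and x: "\<bar>x - pol i s0 b\<bar> \<le> \<zeta>"
  shows "\<bar>occupation (trans_kernel (joint_weight (set_entry pol i s0 b x))) \<mu> s
      - occupation (trans_kernel (joint_weight pol)) \<mu> s\<bar> \<le> l1_norm \<mu> / \<zeta> ^ 3 * \<bar>x - pol i s0 b\<bar>"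
proof -
  let ?wx = "joint_weight (set_entry pol i s0 b x)" and ?w = "joint_weight pol"
  interpret Kx: contractive_kernel "trans_kernel ?wx" "1 - \<zeta>\<^sup>2"
    by (rule contractive_kernel_set_entry[OF pol b x])
  interpret K: contractive_kernel "trans_kernel ?w" "1 - \<zeta>"
    by (rule contractive_kernel_policy[OF pol])
  define \<nu> where "\<nu> = push_forward (trans_kernel (\<lambda>s a. ?wx s a - ?w s a)) (occupation (trans_kernel ?wx) \<mu>)"
  have "\<bar>occupation (trans_kernel ?wx) \<mu> s - occupation (trans_kernel ?w) \<mu> s\<bar>
      \<le> l1_norm (occupation (trans_kernel ?w) \<nu>)"
    unfolding occupation_diff[OF Kx.contractive_kernel_axioms K.contractive_kernel_axioms]
      trans_kernel_diff \<nu>_def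
    by (rule abs_le_l1_norm)
  also have "\<dots> \<le> l1_norm \<nu> / \<zeta>"
    using K.l1_norm_occupation_le by simp
  also have "\<dots> \<le> \<bar>x - pol i s0 b\<bar> * (l1_norm \<mu> / \<zeta>\<^sup>2) / \<zeta>"
  proof (intro divide_right_mono)
    have "l1_norm \<nu> \<le> ((1 - \<zeta>) * \<bar>x - pol i s0 b\<bar>) * l1_norm (occupation (trans_kernel ?wx) \<mu>)"
      unfolding \<nu>_def using sum_abs_joint_weight_set_entry_diff[OF pol b]
      by (intro l1_norm_push_forward_le row_abs_sum_trans_kernel_le)
    also have "\<dots> \<le> (1 * \<bar>x - pol i s0 b\<bar>) * (l1_norm \<mu> / \<zeta>\<^sup>2)"
      using Kx.l1_norm_occupation_le[of \<mu>] zeta_pos l1_norm_nonneg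
      by (intro mult_mono) auto
    finally show "l1_norm \<nu> \<le> \<bar>x - pol i s0 b\<bar> * (l1_norm \<mu> / \<zeta>\<^sup>2)"
      by simp
  qed (use zeta_pos in simp)
  also have "\<dots> = l1_norm \<mu> / \<zeta> ^ 3 * \<bar>x - pol i s0 b\<bar>"
    by (simp add: power2_eq_square power3_eq_cube)
  finally show ?thesis .
qed

lemma vgrad_eq:
  assumes pol: "is_policy AS pol" and b: "b \<in> AS i"
  shows "vgrad AS P r rho i pol s b
    = occupation (trans_kernel (joint_weight pol)) rho s * player_action_value (r i) pol i s b"
proof -
  define x0 where "x0 = pol i s b"
  define g where "g = player_action_value (r i) pol i s b"
  define dx where "dx x = occupation (trans_kernel (joint_weight (set_entry pol i s b x))) rho s" for x
  have set_x0: "set_entry pol i s b x0 = pol"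
    by (simp add: set_entry_def x0_def)
  have "((\<lambda>x. value_fn AS P r rho i (set_entry pol i s b x)) has_real_derivative dx x0 * g) (at x0)"
  proof (rule has_real_derivative_local_slope[OF zeta_pos])
    fix x
    assume x: "\<bar>x - x0\<bar> \<le> \<zeta>"
    show "value_fn AS P r rho i (set_entry pol i s b x) - value_fn AS P r rho i (set_entry pol i s b x0)
        = (x - x0) * (dx x * g)"
      using value_fn_set_entry_diff[OF pol b x[unfolded x0_def]]
      unfolding set_x0 unfolding dx_def g_def x0_def .
    have "\<bar>dx x * g - dx x0 * g\<bar> = \<bar>dx x - dx x0\<bar> * \<bar>g\<bar>"
      by (simp add: left_diff_distrib[symmetric] abs_mult)
    also have "\<dots> \<le> (l1_norm rho / \<zeta> ^ 3 * \<bar>x - x0\<bar>) * \<bar>g\<bar>"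
      using occupation_set_entry_lipschitz[OF pol b x[unfolded x0_def]]
      unfolding dx_def set_x0 unfolding x0_def by (intro mult_right_mono) auto
    finally show "\<bar>dx x * g - dx x0 * g\<bar> \<le> (l1_norm rho / \<zeta> ^ 3 * \<bar>g\<bar>) * \<bar>x - x0\<bar>"
      by (simp add: mult_ac)
  qed
  hence "vgrad AS P r rho i pol s b = dx x0 * g"
    unfolding vgrad_def x0_def set_entry_def[symmetric] by (rule DERIV_imp_deriv)
  thus ?thesis
    unfolding dx_def g_def set_x0 .
qed

end

section \<open>Lipschitz bounds\<close>

lemma abs_mult_diff_le:
  fixes p q a b :: real
  assumes "0 \<le> p" and "0 \<le> b"
  shows "\<bar>p * a - q * b\<bar> \<le> p * \<bar>a - b\<bar> + \<bar>p - q\<bar> * b"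
proof -
  have "p * a - q * b = p * (a - b) + (p - q) * b"
    by (simp add: algebra_simps)
  thus ?thesis
    using assms by (metis abs_mult abs_of_nonneg abs_triangle_ineq)
qed

lemma sum_abs_prod_diff_le:
  fixes p q :: "'i \<Rightarrow> 'b \<Rightarrow> real"
  assumes "finite I" and "\<And>j. j \<in> I \<Longrightarrow> finite (B j)"
    and "\<And>j y. j \<in> I \<Longrightarrow> y \<in> B j \<Longrightarrow> 0 \<le> p j y" "\<And>j y. j \<in> I \<Longrightarrow> y \<in> B j \<Longrightarrow> 0 \<le> q j y"
    and "\<And>j. j \<in> I \<Longrightarrow> (\<Sum>y\<in>B j. p j y) = 1" "\<And>j. j \<in> I \<Longrightarrow> (\<Sum>y\<in>B j. q j y) = 1"
  shows "(\<Sum>g\<in>PiE I B. \<bar>(\<Prod>j\<in>I. p j (g j)) - (\<Prod>j\<in>I. q j (g j))\<bar>)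
    \<le> (\<Sum>j\<in>I. \<Sum>y\<in>B j. \<bar>p j y - q j y\<bar>)"
  using assms
proof (induction I rule: finite_induct)
  case (insert k I)
  let ?p = "\<lambda>g. \<Prod>j\<in>I. p j (g j)" and ?q = "\<lambda>g. \<Prod>j\<in>I. q j (g j)"
  have prod_upd: "(\<Prod>j\<in>insert k I. f j ((g(k := y)) j)) = f k y * (\<Prod>j\<in>I. f j (g j))"
    for f :: "'i \<Rightarrow> 'b \<Rightarrow> real" and g y
    using insert.hyps by (auto intro!: prod.cong)
  have "(\<Sum>g\<in>PiE (insert k I) B. \<bar>(\<Prod>j\<in>insert k I. p j (g j)) - (\<Prod>j\<in>insert k I. q j (g j))\<bar>)
      = (\<Sum>(y, g)\<in>B k \<times> PiE I B. \<bar>p k y * ?p g - q k y * ?q g\<bar>)"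
    unfolding PiE_insert_eq
    by (subst sum.reindex[OF inj_combinator[OF insert.hyps(2)]]) (simp only: comp_def split_def prod_upd)
  also have "\<dots> \<le> (\<Sum>(y, g)\<in>B k \<times> PiE I B. p k y * \<bar>?p g - ?q g\<bar> + \<bar>p k y - q k y\<bar> * ?q g)"
    using insert.prems
    by (intro sum_mono) (auto intro!: abs_mult_diff_le prod_nonneg simp: PiE_def Pi_def)
  also have "\<dots> = (\<Sum>y\<in>B k. \<Sum>g\<in>PiE I B. p k y * \<bar>?p g - ?q g\<bar> + \<bar>p k y - q k y\<bar> * ?q g)"
    by (rule sum.cartesian_product[symmetric])
  also have "\<dots> = (\<Sum>y\<in>B k. p k y) * (\<Sum>g\<in>PiE I B. \<bar>?p g - ?q g\<bar>)
      + (\<Sum>y\<in>B k. \<bar>p k y - q k y\<bar>) * (\<Sum>g\<in>PiE I B. ?q g)"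
    by (simp only: sum.distrib sum_distrib_left[symmetric] sum_distrib_right[symmetric])
  also have "(\<Sum>g\<in>PiE I B. ?q g) = 1"
    using prod_sum_PiE[of I B q] insert by simp
  also have "(\<Sum>y\<in>B k. p k y) = 1"
    using insert.prems by simp
  also have "1 * (\<Sum>g\<in>PiE I B. \<bar>?p g - ?q g\<bar>) + (\<Sum>y\<in>B k. \<bar>p k y - q k y\<bar>) * 1
      \<le> (\<Sum>j\<in>I. \<Sum>y\<in>B j. \<bar>p j y - q j y\<bar>) + (\<Sum>y\<in>B k. \<bar>p k y - q k y\<bar>)"
    using insert.IH insert.prems by simp
  finally show ?case
    unfolding sum.insert[OF insert.hyps] by linarith
qed simp

lemma sum_abs_le_sqrt_card_mult:
  fixes f :: "'b \<Rightarrow> real"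
  shows "(\<Sum>y\<in>A. \<bar>f y\<bar>) \<le> sqrt (real (card A)) * sqrt (\<Sum>y\<in>A. (f y)\<^sup>2)"
proof -
  have "(\<Sum>y\<in>A. \<bar>f y\<bar>) = (\<Sum>y\<in>A. \<bar>1::real\<bar> * \<bar>f y\<bar>)"
    by simp
  also have "\<dots> \<le> L2_set (\<lambda>_. 1::real) A * L2_set f A"
    by (rule L2_set_mult_ineq)
  also have "\<dots> = sqrt (real (card A)) * sqrt (\<Sum>y\<in>A. (f y)\<^sup>2)"
    by (simp add: L2_set_constant L2_set_def)
  finally show ?thesis .
qed

lemma norm_i_le_sqrt_card_mult_sum:
  assumes "\<And>s b. b \<in> B \<Longrightarrow> \<bar>f s b\<bar> \<le> \<alpha> s" and "\<And>s. 0 \<le> \<alpha> s"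
  shows "norm_i B f \<le> sqrt (real (card B)) * (\<Sum>s\<in>UNIV. \<alpha> s)"
proof -
  have "norm_i B f \<le> sqrt (\<Sum>s\<in>UNIV. \<Sum>b\<in>B. (\<alpha> s)\<^sup>2)"
    unfolding norm_i_def using assms
    by (intro real_sqrt_le_mono sum_mono) (metis abs_ge_zero power2_abs power_mono)
  also have "\<dots> = sqrt (real (card B)) * L2_set \<alpha> UNIV"
    by (simp add: L2_set_def real_sqrt_mult sum_distrib_left[symmetric])
  also have "\<dots> \<le> sqrt (real (card B)) * (\<Sum>s\<in>UNIV. \<alpha> s)"
    using assms(2) by (intro mult_left_mono L2_set_le_sum) auto
  finally show ?thesis .
qed

lemma norm_all_eq_sqrt_sum_norm_i:
  "norm_all AS f = sqrt (\<Sum>i\<in>UNIV. (norm_i (AS i) (f i))\<^sup>2)"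
  unfolding norm_all_def norm_i_def by (simp add: sum_nonneg)

lemma sqrt_sum_squares_le_of_weighted_bound:
  fixes N c n :: "'i::finite \<Rightarrow> real"
  assumes N_le: "\<And>i. N i \<le> K * sqrt (c i) * (\<Sum>j\<in>UNIV. sqrt (c j) * n j)"
    and N_nonneg: "\<And>i. 0 \<le> N i" and c_nonneg: "\<And>i. 0 \<le> c i" and K_nonneg: "0 \<le> K"
  shows "sqrt (\<Sum>i\<in>UNIV. (N i)\<^sup>2) \<le> K * (\<Sum>i\<in>UNIV. c i) * sqrt (\<Sum>i\<in>UNIV. (n i)\<^sup>2)"
proof -
  define C where "C = (\<Sum>i\<in>UNIV. c i)"
  define L where "L = sqrt (\<Sum>i\<in>UNIV. (n i)\<^sup>2)"
  have C_nonneg: "0 \<le> C" and L_nonneg: "0 \<le> L"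
    using c_nonneg by (auto simp: C_def L_def sum_nonneg)
  have "(\<Sum>j\<in>UNIV. sqrt (c j) * n j) \<le> (\<Sum>j\<in>UNIV. \<bar>sqrt (c j)\<bar> * \<bar>n j\<bar>)"
    by (intro sum_mono) (metis abs_ge_self abs_mult)
  also have "\<dots> \<le> L2_set (\<lambda>j. sqrt (c j)) UNIV * L2_set n UNIV"
    by (rule L2_set_mult_ineq)
  also have "\<dots> = sqrt C * L"
    using c_nonneg by (simp add: L2_set_def C_def L_def)
  finally have CS: "(\<Sum>j\<in>UNIV. sqrt (c j) * n j) \<le> sqrt C * L" .
  have "(N i)\<^sup>2 \<le> K\<^sup>2 * C * L\<^sup>2 * c i" for i
  proof -
    have "K * sqrt (c i) * (\<Sum>j\<in>UNIV. sqrt (c j) * n j) \<le> K * sqrt (c i) * (sqrt C * L)"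
      using CS K_nonneg c_nonneg[of i] by (intro mult_left_mono) auto
    with N_le[of i] have "N i \<le> K * sqrt (c i) * (sqrt C * L)"
      by linarith
    hence "(N i)\<^sup>2 \<le> (K * sqrt (c i) * (sqrt C * L))\<^sup>2"
      using N_nonneg[of i] by (intro power_mono) auto
    also have "\<dots> = K\<^sup>2 * C * L\<^sup>2 * c i"
      using c_nonneg[of i] C_nonneg by (simp add: power_mult_distrib)
    finally show ?thesis .
  qed
  hence "(\<Sum>i\<in>UNIV. (N i)\<^sup>2) \<le> (\<Sum>i\<in>UNIV. K\<^sup>2 * C * L\<^sup>2 * c i)"
    by (rule sum_mono)
  also have "\<dots> = (K * C * L)\<^sup>2"
    unfolding sum_distrib_left[symmetric] C_def[symmetric] by (simp add: power2_eq_square mult_ac)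
  finally have "sqrt (\<Sum>i\<in>UNIV. (N i)\<^sup>2) \<le> sqrt ((K * C * L)\<^sup>2)"
    by (rule real_sqrt_le_mono)
  also have "\<dots> = K * C * L"
    using K_nonneg C_nonneg L_nonneg by simp
  finally show ?thesis
    unfolding C_def L_def .
qed

context stopping_game
begin

lemma abs_state_value_le:
  assumes "is_policy AS \<sigma>" and rr: "\<And>s a. a \<in> JA \<Longrightarrow> \<bar>rr s a\<bar> \<le> 1"
  shows "\<bar>state_value rr (joint_weight \<sigma>) s\<bar> \<le> 1 / \<zeta>"
proof -
  have "\<bar>expected_reward rr (joint_weight \<sigma>) s'\<bar> \<le> 1" for s'
    using sum_abs_mult_le[of JA "rr s'" 1 "joint_weight \<sigma> s'"] rr sum_abs_joint_weight[OF assms(1)]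
    unfolding expected_reward_def by simp
  hence "\<bar>state_value rr (joint_weight \<sigma>) s\<bar> \<le> l1_norm (occupation (trans_kernel (joint_weight \<sigma>)) (indicator {s})) * 1"
    unfolding state_value_def total_reward_def l1_norm_def by (intro sum_abs_mult_le)
  also have "\<dots> \<le> 1 / \<zeta>"
    using l1_norm_occupation_policy_le[OF assms(1), of "indicator {s}"] by simp
  finally show ?thesis .
qed

lemma abs_action_value_le:
  assumes "is_policy AS \<sigma>" and rr: "\<And>s a. a \<in> JA \<Longrightarrow> \<bar>rr s a\<bar> \<le> 1" and a: "a \<in> JA"
  shows "\<bar>action_value rr (joint_weight \<sigma>) s a\<bar> \<le> 1 / \<zeta>"
proof -
  have "\<bar>action_value rr (joint_weight \<sigma>) s a\<bar> \<le> \<bar>rr s a\<bar> + (\<Sum>s'\<in>UNIV. \<bar>P s a s'\<bar>) * (1 / \<zeta>)"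
    unfolding action_value_def using abs_state_value_le[OF assms(1,2)]
    by (intro order_trans[OF abs_triangle_ineq] add_left_mono sum_abs_mult_le)
  also have "\<dots> \<le> 1 + (1 - \<zeta>) * (1 / \<zeta>)"
    using rr[OF a] sum_P_le[OF a, of s] P_nonneg[OF a] zeta_pos
    by (intro add_mono mult_right_mono) auto
  also have "\<dots> = 1 / \<zeta>"
    using zeta_pos by (simp add: field_simps)
  finally show ?thesis .
qed

lemma abs_player_action_value_le:
  assumes "is_policy AS \<sigma>" and "\<And>s a. a \<in> JA \<Longrightarrow> \<bar>rr s a\<bar> \<le> 1" and b: "b \<in> AS i"
  shows "\<bar>player_action_value rr \<sigma> i s b\<bar> \<le> 1 / \<zeta>"
  using sum_abs_mult_le[of JA _ "1 / \<zeta>" "joint_weight (pure_at \<sigma> i s b) s"]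
    abs_action_value_le[OF assms(1,2)] sum_abs_joint_weight[OF is_policy_pure_at[OF assms(1) b]]
  unfolding player_action_value_def by simp

definition policy_dist :: "('p \<Rightarrow> 's \<Rightarrow> 'a \<Rightarrow> real) \<Rightarrow> ('p \<Rightarrow> 's \<Rightarrow> 'a \<Rightarrow> real) \<Rightarrow> 's \<Rightarrow> real" where
  "policy_dist \<sigma> \<sigma>' s = (\<Sum>j\<in>UNIV. \<Sum>b\<in>AS j. \<bar>\<sigma> j s b - \<sigma>' j s b\<bar>)"

lemma policy_dist_nonneg: "0 \<le> policy_dist \<sigma> \<sigma>' s"
  unfolding policy_dist_def by (auto intro!: sum_nonneg)

lemma sum_abs_joint_weight_diff_le:
  assumes "is_policy AS \<sigma>" and "is_policy AS \<sigma>'"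
  shows "(\<Sum>a\<in>JA. \<bar>joint_weight \<sigma> s a - joint_weight \<sigma>' s a\<bar>) \<le> policy_dist \<sigma> \<sigma>' s"
  unfolding joint_weight_def joint_actions_def policy_dist_def
  by (rule sum_abs_prod_diff_le) (use assms finite_actions in \<open>auto simp: is_policy_def\<close>)

lemma sum_abs_joint_weight_pure_at_diff_le:
  assumes "is_policy AS \<sigma>" and "is_policy AS \<sigma>'" and "b \<in> AS i"
  shows "(\<Sum>a\<in>JA. \<bar>joint_weight (pure_at \<sigma> i s b) s a - joint_weight (pure_at \<sigma>' i s b) s a\<bar>)
    \<le> policy_dist \<sigma> \<sigma>' s"
proof -
  have "(\<Sum>a\<in>JA. \<bar>joint_weight (pure_at \<sigma> i s b) s a - joint_weight (pure_at \<sigma>' i s b) s a\<bar>)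
      \<le> policy_dist (pure_at \<sigma> i s b) (pure_at \<sigma>' i s b) s"
    using assms by (intro sum_abs_joint_weight_diff_le is_policy_pure_at)
  also have "\<dots> \<le> policy_dist \<sigma> \<sigma>' s"
    unfolding policy_dist_def by (intro sum_mono) (auto simp: pure_at_def)
  finally show ?thesis .
qed

lemma policy_dist_le_sum_norm_i:
  "policy_dist \<sigma> \<sigma>' s \<le> (\<Sum>j\<in>UNIV. sqrt (real (card (AS j))) * norm_i (AS j) (\<lambda>s b. \<sigma> j s b - \<sigma>' j s b))"
  unfolding policy_dist_def
proof (rule sum_mono)
  fix j
  have "(\<Sum>b\<in>AS j. \<bar>\<sigma> j s b - \<sigma>' j s b\<bar>)
      \<le> sqrt (real (card (AS j))) * sqrt (\<Sum>b\<in>AS j. (\<sigma> j s b - \<sigma>' j s b)\<^sup>2)"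
    by (rule sum_abs_le_sqrt_card_mult)
  also have "\<dots> \<le> sqrt (real (card (AS j))) * norm_i (AS j) (\<lambda>s b. \<sigma> j s b - \<sigma>' j s b)"
    unfolding norm_i_def
    by (intro mult_left_mono real_sqrt_le_mono member_le_sum) (auto intro!: sum_nonneg)
  finally show "(\<Sum>b\<in>AS j. \<bar>\<sigma> j s b - \<sigma>' j s b\<bar>)
      \<le> sqrt (real (card (AS j))) * norm_i (AS j) (\<lambda>s b. \<sigma> j s b - \<sigma>' j s b)" .
qed

end

locale policy_pair = stopping_game AS P
  for AS :: "'p::finite \<Rightarrow> 'a set" and P :: "'s::finite \<Rightarrow> ('p \<Rightarrow> 'a) \<Rightarrow> 's \<Rightarrow> real" +
  fixes r :: "'p \<Rightarrow> 's \<Rightarrow> ('p \<Rightarrow> 'a) \<Rightarrow> real" and rho :: "'s \<Rightarrow> real"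
    and \<sigma> \<sigma>' :: "'p \<Rightarrow> 's \<Rightarrow> 'a \<Rightarrow> real" and D :: real
  assumes reward_bounded: "\<And>i s a. a \<in> joint_actions AS \<Longrightarrow> \<bar>r i s a\<bar> \<le> 1"
    and rho_nonneg: "\<And>s. 0 \<le> rho s" and rho_sum: "(\<Sum>s\<in>UNIV. rho s) = 1"
    and policy: "is_policy AS \<sigma>" and policy': "is_policy AS \<sigma>'"
    and policy_dist_le: "\<And>s. policy_dist \<sigma> \<sigma>' s \<le> D"
begin

abbreviation "w \<equiv> joint_weight \<sigma>"
abbreviation "w' \<equiv> joint_weight \<sigma>'"
abbreviation "d \<equiv> occupation (trans_kernel w) rho"
abbreviation "d' \<equiv> occupation (trans_kernel w') rho"

lemma d'_nonneg: "0 \<le> d' s"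
  by (rule occupation_policy_nonneg[OF policy']) (rule rho_nonneg)

lemma D_nonneg: "0 \<le> D"
  using policy_dist_nonneg policy_dist_le order_trans by blast

lemma l1_norm_rho: "l1_norm rho = 1"
  using rho_nonneg rho_sum by (simp add: l1_norm_def)

lemma sum_abs_weight_diff_le: "(\<Sum>a\<in>JA. \<bar>w s a - w' s a\<bar>) \<le> D"
  using sum_abs_joint_weight_diff_le[OF policy policy', of s] policy_dist_le[of s] by linarith

lemma l1_norm_occupation_diff_le:
  "l1_norm (\<lambda>s. occupation (trans_kernel w) \<mu> s - occupation (trans_kernel w') \<mu> s) \<le> D * l1_norm \<mu> / \<zeta>\<^sup>2"
proof -
  define \<nu> where "\<nu> = push_forward (trans_kernel (\<lambda>s a. w s a - w' s a)) (occupation (trans_kernel w) \<mu>)"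
  have "l1_norm (\<lambda>s. occupation (trans_kernel w) \<mu> s - occupation (trans_kernel w') \<mu> s)
      = l1_norm (occupation (trans_kernel w') \<nu>)"
    unfolding \<nu>_def occupation_diff[OF contractive_kernel_policy[OF policy] contractive_kernel_policy[OF policy']]
      trans_kernel_diff ..
  also have "\<dots> \<le> l1_norm \<nu> / \<zeta>"
    by (rule l1_norm_occupation_policy_le[OF policy'])
  also have "\<dots> \<le> D * (l1_norm \<mu> / \<zeta>) / \<zeta>"
  proof (intro divide_right_mono)
    have "l1_norm \<nu> \<le> ((1 - \<zeta>) * D) * l1_norm (occupation (trans_kernel w) \<mu>)"
      unfolding \<nu>_def
      by (intro l1_norm_push_forward_le row_abs_sum_trans_kernel_le sum_abs_weight_diff_le)
    also have "\<dots> \<le> (1 * D) * (l1_norm \<mu> / \<zeta>)"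
      using l1_norm_occupation_policy_le[OF policy, of \<mu>] zeta_pos D_nonneg l1_norm_nonneg
      by (intro mult_mono) auto
    finally show "l1_norm \<nu> \<le> D * (l1_norm \<mu> / \<zeta>)"
      by simp
  qed (use zeta_pos in simp)
  also have "\<dots> = D * l1_norm \<mu> / \<zeta>\<^sup>2"
    by (simp add: power2_eq_square)
  finally show ?thesis .
qed

lemma abs_state_value_diff_le: "\<bar>state_value (r i) w s - state_value (r i) w' s\<bar> \<le> D / \<zeta>\<^sup>2"
proof -
  have "\<bar>\<Sum>a\<in>JA. (w s' a - w' s' a) * action_value (r i) w' s' a\<bar> \<le> D * (1 / \<zeta>)" for s'
  proof -
    have "\<bar>\<Sum>a\<in>JA. (w s' a - w' s' a) * action_value (r i) w' s' a\<bar>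
        \<le> (\<Sum>a\<in>JA. \<bar>w s' a - w' s' a\<bar>) * (1 / \<zeta>)"
      using abs_action_value_le[where rr = "r i", OF policy' reward_bounded] by (rule sum_abs_mult_le)
    also have "\<dots> \<le> D * (1 / \<zeta>)"
      using sum_abs_weight_diff_le zeta_pos by (intro mult_right_mono) auto
    finally show ?thesis .
  qed
  hence "\<bar>state_value (r i) w s - state_value (r i) w' s\<bar>
      \<le> l1_norm (occupation (trans_kernel w) (indicator {s})) * (D * (1 / \<zeta>))"
    unfolding state_value_def l1_norm_def
      performance_difference[OF contractive_kernel_policy[OF policy] contractive_kernel_policy[OF policy']]
    by (rule sum_abs_mult_le)
  also have "\<dots> \<le> (1 / \<zeta>) * (D * (1 / \<zeta>))"
    using l1_norm_occupation_policy_le[OF policy, of "indicator {s}"] D_nonneg zeta_pos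
    by (intro mult_right_mono) auto
  also have "\<dots> = D / \<zeta>\<^sup>2"
    by (simp add: power2_eq_square)
  finally show ?thesis .
qed

lemma abs_action_value_diff_le:
  assumes "a \<in> JA"
  shows "\<bar>action_value (r i) w s a - action_value (r i) w' s a\<bar> \<le> D / \<zeta>\<^sup>2"
proof -
  have "\<bar>action_value (r i) w s a - action_value (r i) w' s a\<bar>
      = \<bar>\<Sum>s'\<in>UNIV. P s a s' * (state_value (r i) w s' - state_value (r i) w' s')\<bar>"
    unfolding action_value_def by (simp add: sum_subtractf[symmetric] right_diff_distrib)
  also have "\<dots> \<le> (\<Sum>s'\<in>UNIV. \<bar>P s a s'\<bar>) * (D / \<zeta>\<^sup>2)"
    using abs_state_value_diff_le by (rule sum_abs_mult_le)
  also have "\<dots> \<le> 1 * (D / \<zeta>\<^sup>2)"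
    using P_nonneg[OF assms] sum_P_le[OF assms, of s] zeta_pos D_nonneg
    by (intro mult_right_mono) auto
  finally show ?thesis by simp
qed

lemma abs_player_action_value_diff_le:
  assumes b: "b \<in> AS i"
  shows "\<bar>player_action_value (r i) \<sigma> i s b - player_action_value (r i) \<sigma>' i s b\<bar> \<le> D / \<zeta> + D / \<zeta>\<^sup>2"
proof -
  let ?u = "joint_weight (pure_at \<sigma> i s b) s" and ?u' = "joint_weight (pure_at \<sigma>' i s b) s"
  have "player_action_value (r i) \<sigma> i s b - player_action_value (r i) \<sigma>' i s b
      = (\<Sum>a\<in>JA. (?u a - ?u' a) * action_value (r i) w s a)
        + (\<Sum>a\<in>JA. ?u' a * (action_value (r i) w s a - action_value (r i) w' s a))"
    unfolding player_action_value_def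
    by (simp add: sum_subtractf[symmetric] sum.distrib[symmetric] algebra_simps)
  hence "\<bar>player_action_value (r i) \<sigma> i s b - player_action_value (r i) \<sigma>' i s b\<bar>
      \<le> \<bar>\<Sum>a\<in>JA. (?u a - ?u' a) * action_value (r i) w s a\<bar>
        + \<bar>\<Sum>a\<in>JA. ?u' a * (action_value (r i) w s a - action_value (r i) w' s a)\<bar>"
    by (simp only: abs_triangle_ineq)
  also have "\<dots> \<le> (\<Sum>a\<in>JA. \<bar>?u a - ?u' a\<bar>) * (1 / \<zeta>) + (\<Sum>a\<in>JA. \<bar>?u' a\<bar>) * (D / \<zeta>\<^sup>2)"
  proof (rule add_mono)
    show "\<bar>\<Sum>a\<in>JA. (?u a - ?u' a) * action_value (r i) w s a\<bar> \<le> (\<Sum>a\<in>JA. \<bar>?u a - ?u' a\<bar>) * (1 / \<zeta>)"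
      by (rule sum_abs_mult_le) (rule abs_action_value_le[where rr = "r i", OF policy reward_bounded])
    show "\<bar>\<Sum>a\<in>JA. ?u' a * (action_value (r i) w s a - action_value (r i) w' s a)\<bar>
        \<le> (\<Sum>a\<in>JA. \<bar>?u' a\<bar>) * (D / \<zeta>\<^sup>2)"
      by (rule sum_abs_mult_le) (rule abs_action_value_diff_le)
  qed
  also have "\<dots> \<le> D * (1 / \<zeta>) + 1 * (D / \<zeta>\<^sup>2)"
    using sum_abs_joint_weight_pure_at_diff_le[OF policy policy' b, of s] policy_dist_le[of s]
      sum_abs_joint_weight[OF is_policy_pure_at[OF policy' b]] zeta_pos D_nonneg
    by (intro add_mono mult_right_mono) auto
  finally show ?thesis by simp
qed

lemma abs_vgrad_diff_le:
  assumes b: "b \<in> AS i"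
  shows "\<bar>vgrad AS P r rho i \<sigma> s b - vgrad AS P r rho i \<sigma>' s b\<bar>
    \<le> \<bar>d s - d' s\<bar> * (1 / \<zeta>) + d' s * (D / \<zeta> + D / \<zeta>\<^sup>2)"
proof -
  let ?g = "player_action_value (r i) \<sigma> i s b" and ?g' = "player_action_value (r i) \<sigma>' i s b"
  have "vgrad AS P r rho i \<sigma> s b - vgrad AS P r rho i \<sigma>' s b = (d s - d' s) * ?g + d' s * (?g - ?g')"
    unfolding vgrad_eq[OF policy b] vgrad_eq[OF policy' b] by (simp add: algebra_simps)
  hence "\<bar>vgrad AS P r rho i \<sigma> s b - vgrad AS P r rho i \<sigma>' s b\<bar>
      \<le> \<bar>d s - d' s\<bar> * \<bar>?g\<bar> + d' s * \<bar>?g - ?g'\<bar>"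
    using d'_nonneg[of s]
    by (metis abs_mult abs_of_nonneg abs_triangle_ineq)
  also have "\<dots> \<le> \<bar>d s - d' s\<bar> * (1 / \<zeta>) + d' s * (D / \<zeta> + D / \<zeta>\<^sup>2)"
    using abs_player_action_value_le[where rr = "r i", OF policy reward_bounded b] abs_player_action_value_diff_le[OF b, of s]
      d'_nonneg[of s]
    by (intro add_mono mult_left_mono) auto
  finally show ?thesis .
qed

lemma sum_vgrad_diff_bound_le:
  "(\<Sum>s\<in>UNIV. \<bar>d s - d' s\<bar> * (1 / \<zeta>) + d' s * (D / \<zeta> + D / \<zeta>\<^sup>2)) \<le> 3 * D / \<zeta> ^ 3"
proof -
  have "(\<Sum>s\<in>UNIV. \<bar>d s - d' s\<bar> * (1 / \<zeta>) + d' s * (D / \<zeta> + D / \<zeta>\<^sup>2))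
      = l1_norm (\<lambda>s. d s - d' s) * (1 / \<zeta>) + l1_norm d' * (D / \<zeta> + D / \<zeta>\<^sup>2)"
    using d'_nonneg
    by (simp add: l1_norm_def sum.distrib sum_distrib_right sum_divide_distrib)
  also have "\<dots> \<le> (D / \<zeta>\<^sup>2) * (1 / \<zeta>) + (1 / \<zeta>) * (D / \<zeta> + D / \<zeta>\<^sup>2)"
    using l1_norm_occupation_diff_le[of rho] l1_norm_occupation_policy_le[OF policy', of rho]
      l1_norm_rho zeta_pos D_nonneg
    by (intro add_mono mult_right_mono) auto
  also have "\<dots> = 2 * D / \<zeta> ^ 3 + D / \<zeta>\<^sup>2"
    using zeta_pos by (simp add: field_simps power3_eq_cube power2_eq_square)
  also have "\<dots> \<le> 2 * D / \<zeta> ^ 3 + D / \<zeta> ^ 3"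
  proof -
    have "D / \<zeta>\<^sup>2 \<le> D / \<zeta> ^ 3"
      using zeta_pos zeta_le_1 D_nonneg by (intro divide_left_mono power_decreasing) auto
    thus ?thesis by simp
  qed
  finally show ?thesis by simp
qed

lemma norm_vgrad_diff_le:
  "norm_i (AS i) (\<lambda>s b. vgrad AS P r rho i \<sigma> s b - vgrad AS P r rho i \<sigma>' s b)
    \<le> 3 * sqrt (real (card (AS i))) / \<zeta> ^ 3 * D"
proof -
  have "norm_i (AS i) (\<lambda>s b. vgrad AS P r rho i \<sigma> s b - vgrad AS P r rho i \<sigma>' s b)
      \<le> sqrt (real (card (AS i))) * (\<Sum>s\<in>UNIV. \<bar>d s - d' s\<bar> * (1 / \<zeta>) + d' s * (D / \<zeta> + D / \<zeta>\<^sup>2))"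
    using abs_vgrad_diff_le d'_nonneg zeta_pos D_nonneg
    by (intro norm_i_le_sqrt_card_mult_sum) auto
  also have "\<dots> \<le> sqrt (real (card (AS i))) * (3 * D / \<zeta> ^ 3)"
    by (intro mult_left_mono sum_vgrad_diff_bound_le) auto
  finally show ?thesis by (simp add: mult_ac)
qed

end

theorem lemmaE8:
  fixes AS :: "'p::finite \<Rightarrow> 'a set"
    and P :: "'s::finite \<Rightarrow> ('p \<Rightarrow> 'a) \<Rightarrow> 's \<Rightarrow> real"
    and r :: "'p \<Rightarrow> 's \<Rightarrow> ('p \<Rightarrow> 'a) \<Rightarrow> real"
    and rho :: "'s \<Rightarrow> real"
    and pol pol' :: "'p \<Rightarrow> 's \<Rightarrow> 'a \<Rightarrow> real"
  assumes AS_fin: "\<And>i. finite (AS i)" and AS_ne: "\<And>i. AS i \<noteq> {}"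
    and r_bound: "\<And>i s a. a \<in> joint_actions AS \<Longrightarrow> \<bar>r i s a\<bar> \<le> 1"
    and P_nonneg: "\<And>s a s'. a \<in> joint_actions AS \<Longrightarrow> P s a s' \<ge> 0"
    and zeta_pos: "zeta_min AS P > 0"
    and rho_nonneg: "\<And>s. rho s \<ge> 0" and rho_sum: "(\<Sum>s\<in>UNIV. rho s) = 1"
    and pol: "is_policy AS pol" and pol': "is_policy AS pol'"
  shows "(\<forall>i. norm_i (AS i) (\<lambda>s b. vgrad AS P r rho i pol s b - vgrad AS P r rho i pol' s b)
              \<le> 3 * sqrt (real (card (AS i))) / (zeta_min AS P) ^ 3
                 * (\<Sum>j\<in>UNIV. sqrt (real (card (AS j))) * norm_i (AS j) (\<lambda>s b. pol j s b - pol' j s b)))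
       \<and> norm_all AS (\<lambda>i s b. vgrad AS P r rho i pol s b - vgrad AS P r rho i pol' s b)
              \<le> 3 * real (\<Sum>i\<in>UNIV. card (AS i)) / (zeta_min AS P) ^ 3
                 * norm_all AS (\<lambda>i s b. pol i s b - pol' i s b)"
proof -
  interpret stopping_game AS P
    using AS_fin AS_ne P_nonneg zeta_pos by unfold_locales
  define D where "D = (\<Sum>j\<in>UNIV. sqrt (real (card (AS j))) * norm_i (AS j) (\<lambda>s b. pol j s b - pol' j s b))"
  interpret policy_pair AS P r rho pol pol' D
    using r_bound rho_nonneg rho_sum pol pol' policy_dist_le_sum_norm_i
    by unfold_locales (auto simp: D_def)
  have player: "norm_i (AS i) (\<lambda>s b. vgrad AS P r rho i pol s b - vgrad AS P r rho i pol' s b)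
      \<le> 3 / \<zeta> ^ 3 * sqrt (real (card (AS i))) * D" for i
    using norm_vgrad_diff_le[of i] by (simp add: mult_ac)
  have "sqrt (\<Sum>i\<in>UNIV. (norm_i (AS i) (\<lambda>s b. vgrad AS P r rho i pol s b - vgrad AS P r rho i pol' s b))\<^sup>2)
      \<le> 3 / \<zeta> ^ 3 * (\<Sum>i\<in>UNIV. real (card (AS i))) * sqrt (\<Sum>i\<in>UNIV. (norm_i (AS i) (\<lambda>s b. pol i s b - pol' i s b))\<^sup>2)"
    using player zeta_pos unfolding D_def
    by (intro sqrt_sum_squares_le_of_weighted_bound) (auto simp: norm_i_def intro!: sum_nonneg)
  with player show ?thesis
    unfolding norm_all_eq_sqrt_sum_norm_i D_def by (simp add: mult_ac)
qed

end
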